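(* Let $c>0$, $f_s>0$, let $M,N,K\ge1$ be integers, $T_{\max}=(N-1)/f_s$, $\bm{r}^{\mathrm{mic}}_1,\dots,\bm{r}^{\mathrm{mic}}_M\in\mathbb{R}^3$ with $E_M=\{\bm{r}^{\mathrm{mic}}_m\}$, $\bm{x}\in\mathbb{R}^{MN}$. Let $\kappa$ be continuous with $\kappa(0)>0$ and $\lim_{|t|\to\infty}\kappa(t)=0$, and assume $\Gamma^K$ is amplitude lower-bounded. Let $(\bm{a}^l,\bm{r}^l)_{l}$ be a minimizing sequence in $\mathbb{R}_+^K\times\mathscr{C}^K$ for $\inf_{\mathbb{R}_+^K\times\mathscr{C}^K}T$, where $T(\bm{a},\bm{r})=\frac12\|\bm{x}-\sum_{k=1}^K a_k\gamma(\bm{r}_k)\|_2^2$. Then, up to extracting a subsequence, for each $k\in\{1,\dots,K\}$ one of the following holds: (i) there exist $\bm{r}_k\in\mathscr{C}$ and $a_k\in\mathbb{R}_+$ with $\bm{r}^l_k\to\bm{r}_k$ and $a^l_k\to a_k$ as $l\to\infty$; (ii) there exist $m_k\in\{1,\dots,M\}$ and $\widetilde a_k\in\mathbb{R}_+$ with $\bm{r}^l_k\to\bm{r}^{\mathrm{mic}}_{m_k}$, $a^l_k\to0$, and $\dfrac{a^l_k}{4\pi\|\bm{r}^l_k-\bm{r}^{\mathrm{mic}}_{m_k}\|_2}\to\widetilde a_k$ as $l\to\infty$.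
   Context: $\mathbb{R}_+=[0,+\infty)$, $\|\cdot\|_2$ Euclidean norm, $\bm{x}=(x_{m,n})_{1\le m\le M,0\le n\le N-1}$. For $\bm{r}\in\mathbb{R}^3\setminus E_M$, $\gamma_{m,n}(\bm{r})=\dfrac{\kappa\big(n/f_s-\|\bm{r}-\bm{r}^{\mathrm{mic}}_m\|_2/c\big)}{4\pi\|\bm{r}-\bm{r}^{\mathrm{mic}}_m\|_2}$. $\mathscr{C}=\bigcap_{m=1}^M\overline{B(\bm{r}^{\mathrm{mic}}_m,cT_{\max})}\setminus E_M$. $\Gamma^K(\bm{a},\bm{r})=\sum_k a_k\gamma(\bm{r}_k)$; it is amplitude lower-bounded if there is $C>0$ with $\|\Gamma^K(\bm{a},\bm{r})\|_2\ge C\sum_k a_k$ for all $(\bm{a},\bm{r})\in\mathbb{R}_+^K\times\mathscr{C}^K$. *)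

theory Defs
  imports "HOL-Analysis.Analysis"
begin

(* Signals in R^{MN} are represented as functions nat => nat => real,
   indexed by m in {1..M} (microphone) and n in {0..N-1} (sample). *)

definition sig_norm :: "nat \<Rightarrow> nat \<Rightarrow> (nat \<Rightarrow> nat \<Rightarrow> real) \<Rightarrow> real" where
  "sig_norm M N v = sqrt (\<Sum>m\<in>{1..M}. \<Sum>n\<in>{0..<N}. (v m n)\<^sup>2)"

definition gam :: "real \<Rightarrow> real \<Rightarrow> (real \<Rightarrow> real) \<Rightarrow> (nat \<Rightarrow> real^3) \<Rightarrow> real^3 \<Rightarrow> nat \<Rightarrow> nat \<Rightarrow> real" where
  "gam c fs \<kappa> rmic r m n =
     \<kappa> (real n / fs - norm (r - rmic m) / c) / (4 * pi * norm (r - rmic m))"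

definition GammaK :: "real \<Rightarrow> real \<Rightarrow> (real \<Rightarrow> real) \<Rightarrow> (nat \<Rightarrow> real^3) \<Rightarrow> nat
    \<Rightarrow> (nat \<Rightarrow> real) \<Rightarrow> (nat \<Rightarrow> real^3) \<Rightarrow> nat \<Rightarrow> nat \<Rightarrow> real" where
  "GammaK c fs \<kappa> rmic K a r m n = (\<Sum>k\<in>{1..K}. a k * gam c fs \<kappa> rmic (r k) m n)"

definition micset :: "nat \<Rightarrow> (nat \<Rightarrow> real^3) \<Rightarrow> (real^3) set" where
  "micset M rmic = rmic ` {1..M}"

definition Cset :: "real \<Rightarrow> real \<Rightarrow> nat \<Rightarrow> (nat \<Rightarrow> real^3) \<Rightarrow> (real^3) set" where
  "Cset c Tmax M rmic = (\<Inter>m\<in>{1..M}. cball (rmic m) (c * Tmax)) - micset M rmic"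

definition admissible :: "real \<Rightarrow> real \<Rightarrow> nat \<Rightarrow> (nat \<Rightarrow> real^3) \<Rightarrow> nat
    \<Rightarrow> (nat \<Rightarrow> real) \<Rightarrow> (nat \<Rightarrow> real^3) \<Rightarrow> bool" where
  "admissible c Tmax M rmic K a r \<longleftrightarrow> (\<forall>k\<in>{1..K}. a k \<ge> 0 \<and> r k \<in> Cset c Tmax M rmic)"

definition amplitude_lower_bounded :: "real \<Rightarrow> real \<Rightarrow> (real \<Rightarrow> real) \<Rightarrow> real \<Rightarrow> nat \<Rightarrow> nat
    \<Rightarrow> (nat \<Rightarrow> real^3) \<Rightarrow> nat \<Rightarrow> bool" where
  "amplitude_lower_bounded c fs \<kappa> Tmax M N rmic K \<longleftrightarrow>
     (\<exists>C>0. \<forall>a r. admissible c Tmax M rmic K a r \<longrightarrow>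
        sig_norm M N (GammaK c fs \<kappa> rmic K a r) \<ge> C * (\<Sum>k\<in>{1..K}. a k))"

definition Tobj :: "real \<Rightarrow> real \<Rightarrow> (real \<Rightarrow> real) \<Rightarrow> nat \<Rightarrow> nat \<Rightarrow> (nat \<Rightarrow> real^3) \<Rightarrow> nat
    \<Rightarrow> (nat \<Rightarrow> nat \<Rightarrow> real) \<Rightarrow> (nat \<Rightarrow> real) \<Rightarrow> (nat \<Rightarrow> real^3) \<Rightarrow> real" where
  "Tobj c fs \<kappa> M N rmic K x a r =
     1/2 * (sig_norm M N (\<lambda>m n. x m n - GammaK c fs \<kappa> rmic K a r m n))\<^sup>2"

end

(*
  Along a minimizing sequence the objective is bounded, hence so is the signal
  Gamma^K(a^l, r^l), and amplitude lower-boundedness bounds the amplitudes.  At the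
  first sample n = 0 of microphone m, source k contributes (a_k / 4 pi d_k) kappa(-d_k / c),
  d_k being its distance to the microphone.  Sources with d_k >= c delta contribute
  at least -A sup|kappa| / (4 pi c delta), while for d_k < c delta continuity gives
  kappa(-d_k / c) >= kappa(0) / 2 > 0; since the total is bounded, the effective
  amplitudes a_k / 4 pi d_k stay bounded.  Compactness then yields, for each source,
  a subsequence along which either the position converges inside the admissible set
  together with the amplitude, or the position tends to a microphone and the effective
  amplitude converges, which forces the amplitude to 0.  Finitely many sources are
  handled by successive extraction.
*)
theory Submission
  imports Defs
begin

lemma finite_common_subseq:
  fixes Q :: "'k \<Rightarrow> (nat \<Rightarrow> nat) \<Rightarrow> bool"
  assumes "finite T"
    and extend: "\<And>k (\<phi>::nat \<Rightarrow> nat). k \<in> T \<Longrightarrow> strict_mono \<phi>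
      \<Longrightarrow> \<exists>\<psi>::nat \<Rightarrow> nat. strict_mono \<psi> \<and> Q k (\<phi> \<circ> \<psi>)"
    and subseq: "\<And>k \<phi> (\<psi>::nat \<Rightarrow> nat). k \<in> T \<Longrightarrow> Q k \<phi> \<Longrightarrow> strict_mono \<psi> \<Longrightarrow> Q k (\<phi> \<circ> \<psi>)"
  shows "\<exists>\<phi>. strict_mono \<phi> \<and> (\<forall>k\<in>T. Q k \<phi>)"
proof -
  have "\<exists>\<phi>. strict_mono \<phi> \<and> (\<forall>k\<in>U. Q k \<phi>)" if "finite U" "U \<subseteq> T" for U
    using that
  proof (induction U rule: finite_induct)
    case empty
    show ?case using strict_mono_id by blast
  next
    case (insert k U)
    then obtain \<phi> where \<phi>: "strict_mono \<phi>" "\<forall>j\<in>U. Q j \<phi>"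
      by blast
    obtain \<psi> where \<psi>: "strict_mono \<psi>" "Q k (\<phi> \<circ> \<psi>)"
      using extend[of k \<phi>] \<phi>(1) insert.prems by blast
    have "Q j (\<phi> \<circ> \<psi>)" if "j \<in> U" for j
      using subseq[of j \<phi> \<psi>] \<psi>(1) \<phi>(2) that insert.prems by blast
    then show ?case
      using strict_mono_o[OF \<phi>(1) \<psi>(1)] \<psi>(2) by blast
  qed
  then show ?thesis
    using assms(1) by blast
qed

definition source_limit ::
    "'a::real_normed_vector set \<Rightarrow> 'a set \<Rightarrow> (nat \<Rightarrow> 'a) \<Rightarrow> (nat \<Rightarrow> real) \<Rightarrow> bool"
  where "source_limit C P r a \<longleftrightarrow>
    (\<exists>y\<in>C. \<exists>\<alpha>\<ge>0. r \<longlonglongrightarrow> y \<and> a \<longlonglongrightarrow> \<alpha>) \<or>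
    (\<exists>p\<in>P. \<exists>\<beta>\<ge>0. r \<longlonglongrightarrow> p \<and> a \<longlonglongrightarrow> 0 \<and> (\<lambda>l. a l / (4 * pi * norm (r l - p))) \<longlonglongrightarrow> \<beta>)"

lemma source_limit_subseq:
  assumes "source_limit C P r a" "strict_mono \<psi>"
  shows "source_limit C P (r \<circ> \<psi>) (a \<circ> \<psi>)"
proof -
  have lim: "(f \<circ> \<psi>) \<longlonglongrightarrow> L" if "f \<longlonglongrightarrow> L" for f :: "nat \<Rightarrow> 'b::topological_space" and L
    using LIMSEQ_subseq_LIMSEQ[OF that assms(2)] .
  have ratio: "(\<lambda>l. (a \<circ> \<psi>) l / (4 * pi * norm ((r \<circ> \<psi>) l - p)))
      = (\<lambda>l. a l / (4 * pi * norm (r l - p))) \<circ> \<psi>" for p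
    by auto
  from assms(1) show ?thesis
    unfolding source_limit_def ratio by (elim disjE bexE exE conjE) (blast intro: lim)+
qed

lemma source_limit_subseq_exists:
  fixes r :: "nat \<Rightarrow> 'a::{real_normed_vector, heine_borel}" and a :: "nat \<Rightarrow> real"
    and \<phi> :: "nat \<Rightarrow> nat"
  assumes "compact S" and r: "\<And>l. r l \<in> S - P" and a: "\<And>l. a l \<in> {0..A}"
    and ratio: "\<And>p. p \<in> P \<Longrightarrow> \<exists>R. \<forall>l. a l / (4 * pi * norm (r l - p)) \<le> R"
  shows "\<exists>\<psi>. strict_mono \<psi> \<and> source_limit (S - P) P (r \<circ> \<phi> \<circ> \<psi>) (a \<circ> \<phi> \<circ> \<psi>)"
proof -
  have "\<forall>l. (r \<circ> \<phi>) l \<in> S"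
    using r by simp
  then obtain y \<psi> where y: "y \<in> S" and \<psi>: "strict_mono \<psi>" and r\<psi>: "(r \<circ> \<phi> \<circ> \<psi>) \<longlonglongrightarrow> y"
    by (rule seq_compactE[OF compact_imp_seq_compact[OF \<open>compact S\<close>]])
  show ?thesis
  proof (cases "y \<in> P")
    case False
    have "\<forall>l. (a \<circ> \<phi> \<circ> \<psi>) l \<in> {0..A}"
      using a by simp
    then obtain \<alpha> \<zeta> where \<alpha>: "\<alpha> \<in> {0..A}" and \<zeta>: "strict_mono \<zeta>"
      and a\<zeta>: "(a \<circ> \<phi> \<circ> \<psi> \<circ> \<zeta>) \<longlonglongrightarrow> \<alpha>"
      by (rule seq_compactE[OF compact_imp_seq_compact[OF compact_Icc]])
    have "(r \<circ> \<phi> \<circ> \<psi> \<circ> \<zeta>) \<longlonglongrightarrow> y"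
      using LIMSEQ_subseq_LIMSEQ[OF r\<psi> \<zeta>] .
    with y False \<alpha> a\<zeta> have "source_limit (S - P) P (r \<circ> \<phi> \<circ> (\<psi> \<circ> \<zeta>)) (a \<circ> \<phi> \<circ> (\<psi> \<circ> \<zeta>))"
      unfolding source_limit_def o_assoc by auto
    then show ?thesis
      using strict_mono_o[OF \<psi> \<zeta>] by blast
  next
    case True
    obtain R where R: "\<And>l. a l / (4 * pi * norm (r l - y)) \<le> R"
      using ratio[OF True] by blast
    define q where "q l = a (\<phi> (\<psi> l)) / (4 * pi * norm (r (\<phi> (\<psi> l)) - y))" for l
    have "\<forall>l. q l \<in> {0..R}"
      using R a by (simp add: q_def)
    then obtain \<beta> \<zeta> where \<beta>: "\<beta> \<in> {0..R}" and \<zeta>: "strict_mono \<zeta>" and q\<zeta>: "(q \<circ> \<zeta>) \<longlonglongrightarrow> \<beta>"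
      by (rule seq_compactE[OF compact_imp_seq_compact[OF compact_Icc]])
    have r\<psi>\<zeta>: "(r \<circ> \<phi> \<circ> \<psi> \<circ> \<zeta>) \<longlonglongrightarrow> y"
      using LIMSEQ_subseq_LIMSEQ[OF r\<psi> \<zeta>] .
    have "r l \<noteq> y" for l
      using r[of l] True by blast
    then have "(a \<circ> \<phi> \<circ> \<psi> \<circ> \<zeta>) l = (q \<circ> \<zeta>) l * (4 * pi * norm ((r \<circ> \<phi> \<circ> \<psi> \<circ> \<zeta>) l - y))" for l
      by (simp add: q_def)
    moreover have "(\<lambda>l. (q \<circ> \<zeta>) l * (4 * pi * norm ((r \<circ> \<phi> \<circ> \<psi> \<circ> \<zeta>) l - y)))
        \<longlonglongrightarrow> \<beta> * (4 * pi * norm (y - y))"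
      by (intro tendsto_intros q\<zeta> r\<psi>\<zeta>)
    ultimately have "(a \<circ> \<phi> \<circ> \<psi> \<circ> \<zeta>) \<longlonglongrightarrow> 0"
      by (simp add: comp_def)
    moreover have "(\<lambda>l. (a \<circ> \<phi> \<circ> \<psi> \<circ> \<zeta>) l / (4 * pi * norm ((r \<circ> \<phi> \<circ> \<psi> \<circ> \<zeta>) l - y))) = q \<circ> \<zeta>"
      by (simp add: q_def comp_def)
    ultimately have "source_limit (S - P) P (r \<circ> \<phi> \<circ> (\<psi> \<circ> \<zeta>)) (a \<circ> \<phi> \<circ> (\<psi> \<circ> \<zeta>))"
      using True \<beta> r\<psi>\<zeta> q\<zeta> unfolding source_limit_def o_assoc by fastforce
    then show ?thesis
      using strict_mono_o[OF \<psi> \<zeta>] by blast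
  qed
qed

lemma bounded_range_if_continuous_tendsto_at_infinity:
  fixes f :: "'a::{real_normed_vector, heine_borel} \<Rightarrow> 'b::real_normed_vector"
  assumes "continuous_on UNIV f" "(f \<longlongrightarrow> l) at_infinity"
  shows "bounded (range f)"
proof -
  obtain b where b: "\<And>x. b \<le> norm x \<Longrightarrow> dist (f x) l < 1"
    using assms(2) unfolding tendsto_iff eventually_at_infinity by (meson zero_less_one)
  have "range f \<subseteq> f ` cball 0 b \<union> ball l 1"
  proof
    fix y assume "y \<in> range f"
    then obtain x where "y = f x" by blast
    then show "y \<in> f ` cball 0 b \<union> ball l 1"
      using b[of x] by (cases "b \<le> norm x") (auto simp: dist_commute)
  qed
  moreover have "bounded (f ` cball 0 b)"
    using assms(1) by (intro compact_imp_bounded compact_continuous_image)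
      (auto intro: continuous_on_subset)
  ultimately show ?thesis
    using bounded_Un bounded_ball bounded_subset by blast
qed

lemma weight_le_if_weighted_sum_le:
  fixes w s :: "'i \<Rightarrow> real" and \<eta> W Km B :: real
  assumes "finite I" "k \<in> I" "\<eta> > 0" "W \<ge> 0"
    and w: "\<And>i. i \<in> I \<Longrightarrow> 0 \<le> w i" and s: "\<And>i. i \<in> I \<Longrightarrow> \<bar>s i\<bar> \<le> Km"
    and alt: "\<And>i. i \<in> I \<Longrightarrow> \<eta> \<le> s i \<or> w i \<le> W"
    and sum: "(\<Sum>i\<in>I. w i * s i) \<le> B"
  shows "w k \<le> (B + card I * (W * Km)) / \<eta> + W"
proof -
  have WKm: "0 \<le> W * Km" using s[OF \<open>k \<in> I\<close>] \<open>W \<ge> 0\<close> by simp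
  \<comment> \<open>Shifted by \<open>W * Km\<close>, every term is nonnegative, so each is bounded by the shifted sum.\<close>
  have term_ge: "0 \<le> w i * s i + W * Km" if "i \<in> I" for i
  proof (cases "\<eta> \<le> s i")
    case True
    then have "0 \<le> w i * s i"
      using w[OF that] \<open>\<eta> > 0\<close> by (intro mult_nonneg_nonneg) auto
    then show ?thesis using WKm by linarith
  next
    case False
    then have "\<bar>w i * s i\<bar> \<le> W * Km"
      using alt[OF that] w[OF that] s[OF that] \<open>W \<ge> 0\<close> by (auto simp: abs_mult intro: mult_mono)
    then show ?thesis by linarith
  qed
  have shifted_sum: "(\<Sum>i\<in>I. w i * s i + W * Km) \<le> B + card I * (W * Km)"
    using sum by (simp add: sum.distrib)
  have "w k * s k + W * Km \<le> (\<Sum>i\<in>I. w i * s i + W * Km)"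
    using term_ge by (intro member_le_sum assms(1,2)) blast
  then have wk: "w k * s k \<le> B + card I * (W * Km)"
    using shifted_sum WKm by linarith
  have bound_nonneg: "0 \<le> B + card I * (W * Km)"
    using sum_nonneg[of I "\<lambda>i. w i * s i + W * Km", OF term_ge] shifted_sum by linarith
  show ?thesis
  proof (cases "\<eta> \<le> s k")
    case True
    then have "w k * \<eta> \<le> B + card I * (W * Km)"
      using wk mult_left_mono[OF True w[OF \<open>k \<in> I\<close>]] by linarith
    then have "w k \<le> (B + card I * (W * Km)) / \<eta>"
      using \<open>\<eta> > 0\<close> by (simp add: pos_le_divide_eq)
    then show ?thesis using \<open>W \<ge> 0\<close> by linarith
  next
    case False
    moreover have "0 \<le> (B + card I * (W * Km)) / \<eta>"
      using bound_nonneg \<open>\<eta> > 0\<close> by simp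
    ultimately show ?thesis
      using alt[OF \<open>k \<in> I\<close>] by linarith
  qed
qed

lemma sig_norm_eq_L2_set: "sig_norm M N v = L2_set (\<lambda>m. L2_set (v m) {0..<N}) {1..M}"
  unfolding sig_norm_def L2_set_def by (simp add: sum_nonneg)

lemma abs_le_sig_norm:
  assumes "m \<in> {1..M}" "n < N"
  shows "\<bar>v m n\<bar> \<le> sig_norm M N v"
proof -
  have "\<bar>v m n\<bar> \<le> L2_set (v m) {0..<N}"
    using assms(2) member_le_L2_set[of "{0..<N}" n "\<lambda>n. \<bar>v m n\<bar>"] by (simp add: L2_set_def)
  also have "\<dots> \<le> sig_norm M N v"
    unfolding sig_norm_eq_L2_set using assms(1) by (rule member_le_L2_set[rotated]) simp
  finally show ?thesis .
qed

lemma sig_norm_diff_le: "sig_norm M N (\<lambda>m n. u m n - v m n) \<le> sig_norm M N u + sig_norm M N v"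
proof -
  have "L2_set (\<lambda>n. u m n - v m n) {0..<N} \<le> L2_set (u m) {0..<N} + L2_set (v m) {0..<N}" for m
    using L2_set_triangle_ineq[of "u m" "\<lambda>n. - v m n" "{0..<N}"] by (simp add: L2_set_def)
  then have "sig_norm M N (\<lambda>m n. u m n - v m n)
      \<le> L2_set (\<lambda>m. L2_set (u m) {0..<N} + L2_set (v m) {0..<N}) {1..M}"
    unfolding sig_norm_eq_L2_set by (intro L2_set_mono) auto
  also have "\<dots> \<le> sig_norm M N u + sig_norm M N v"
    unfolding sig_norm_eq_L2_set by (rule L2_set_triangle_ineq)
  finally show ?thesis .
qed

lemma sig_norm_GammaK_le:
  "sig_norm M N (GammaK c fs \<kappa> rmic K a r)
     \<le> sig_norm M N x + sqrt (2 * Tobj c fs \<kappa> M N rmic K x a r)"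
proof -
  let ?\<Gamma> = "GammaK c fs \<kappa> rmic K a r"
  have "sig_norm M N ?\<Gamma> = sig_norm M N (\<lambda>m n. x m n - (x m n - ?\<Gamma> m n))"
    by simp
  also have "\<dots> \<le> sig_norm M N x + sig_norm M N (\<lambda>m n. x m n - ?\<Gamma> m n)"
    by (rule sig_norm_diff_le)
  also have "sig_norm M N (\<lambda>m n. x m n - ?\<Gamma> m n) = sqrt (2 * Tobj c fs \<kappa> M N rmic K x a r)"
    unfolding Tobj_def by (simp add: sig_norm_def sum_nonneg)
  finally show ?thesis .
qed

lemma sig_norm_GammaK_bounded:
  assumes "convergent (\<lambda>l. Tobj c fs \<kappa> M N rmic K x (al l) (rl l))"
  shows "\<exists>B. \<forall>l. sig_norm M N (GammaK c fs \<kappa> rmic K (al l) (rl l)) \<le> B"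
proof -
  obtain T where T: "\<And>l. \<bar>Tobj c fs \<kappa> M N rmic K x (al l) (rl l)\<bar> \<le> T"
    using convergent_imp_Bseq[OF assms] unfolding Bseq_def by auto
  have "sig_norm M N (GammaK c fs \<kappa> rmic K (al l) (rl l)) \<le> sig_norm M N x + sqrt (2 * T)" for l
  proof -
    have "sqrt (2 * Tobj c fs \<kappa> M N rmic K x (al l) (rl l)) \<le> sqrt (2 * T)"
      using T[of l] by (simp add: abs_le_iff)
    then show ?thesis
      using sig_norm_GammaK_le[of M N c fs \<kappa> rmic K "al l" "rl l" x] by linarith
  qed
  then show ?thesis by blast
qed

lemma amplitude_le_sig_norm_GammaK:
  assumes "amplitude_lower_bounded c fs \<kappa> Tmax M N rmic K"
  obtains C where "C > 0"
    "\<And>a r k. admissible c Tmax M rmic K a r \<Longrightarrow> k \<in> {1..K}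
       \<Longrightarrow> a k \<le> sig_norm M N (GammaK c fs \<kappa> rmic K a r) / C"
proof -
  obtain C where "C > 0" and C: "\<And>a r. admissible c Tmax M rmic K a r
      \<Longrightarrow> C * (\<Sum>k\<in>{1..K}. a k) \<le> sig_norm M N (GammaK c fs \<kappa> rmic K a r)"
    using assms unfolding amplitude_lower_bounded_def by blast
  have "a k \<le> sig_norm M N (GammaK c fs \<kappa> rmic K a r) / C"
    if adm: "admissible c Tmax M rmic K a r" and k: "k \<in> {1..K}" for a r k
  proof -
    have "a k \<le> (\<Sum>k\<in>{1..K}. a k)"
      using adm k unfolding admissible_def by (intro member_le_sum) auto
    with C[OF adm] have "C * a k \<le> sig_norm M N (GammaK c fs \<kappa> rmic K a r)"
      using \<open>C > 0\<close> by (meson mult_left_mono less_imp_le order_trans)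
    then show ?thesis
      using \<open>C > 0\<close> by (simp add: pos_le_divide_eq mult.commute)
  qed
  with \<open>C > 0\<close> show ?thesis by (rule that)
qed

lemma GammaK_first_sample:
  "GammaK c fs \<kappa> rmic K a r m 0 =
     (\<Sum>k\<in>{1..K}. a k / (4 * pi * norm (r k - rmic m)) * \<kappa> (- (norm (r k - rmic m) / c)))"
  unfolding GammaK_def gam_def by (simp add: mult.commute)

lemma amplitude_ratio_le:
  fixes \<kappa> :: "real \<Rightarrow> real"
  assumes "c > 0" "\<delta> > 0" "\<eta> > 0" "N \<ge> 1"
    and \<kappa>_near_0: "\<And>t. \<bar>t\<bar> < \<delta> \<Longrightarrow> \<eta> \<le> \<kappa> t" and \<kappa>_bound: "\<And>t. \<bar>\<kappa> t\<bar> \<le> Km"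
    and adm: "admissible c Tmax M rmic K a r" and a_le: "\<And>j. j \<in> {1..K} \<Longrightarrow> a j \<le> A"
    and m: "m \<in> {1..M}" and k: "k \<in> {1..K}"
  shows "a k / (4 * pi * norm (r k - rmic m))
    \<le> (sig_norm M N (GammaK c fs \<kappa> rmic K a r) + K * (A / (4 * pi * (c * \<delta>)) * Km)) / \<eta>
       + A / (4 * pi * (c * \<delta>))"
proof -
  define d where "d j = norm (r j - rmic m)" for j
  have a_nonneg: "0 \<le> a j" and d_pos: "0 < d j" if "j \<in> {1..K}" for j
  proof -
    have "0 \<le> a j \<and> r j \<in> Cset c Tmax M rmic"
      using adm that unfolding admissible_def by blast
    then show "0 \<le> a j" "0 < d j"
      using m unfolding Cset_def micset_def d_def by auto
  qed
  have "0 \<le> A" using a_nonneg[OF k] a_le[OF k] by linarith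
  have alt: "\<eta> \<le> \<kappa> (- (d j / c)) \<or> a j / (4 * pi * d j) \<le> A / (4 * pi * (c * \<delta>))"
    if "j \<in> {1..K}" for j
  proof (cases "d j < c * \<delta>")
    case True
    then have "\<bar>- (d j / c)\<bar> < \<delta>"
      using d_pos[OF that] \<open>c > 0\<close> by (simp add: divide_less_eq mult.commute)
    then show ?thesis using \<kappa>_near_0 by blast
  next
    case False
    then have "a j / (4 * pi * d j) \<le> A / (4 * pi * (c * \<delta>))"
      using a_nonneg[OF that] a_le[OF that] \<open>c > 0\<close> \<open>\<delta> > 0\<close> by (intro frac_le) auto
    then show ?thesis ..
  qed
  have "GammaK c fs \<kappa> rmic K a r m 0 \<le> sig_norm M N (GammaK c fs \<kappa> rmic K a r)"
    using abs_le_sig_norm[OF m, of 0 N "GammaK c fs \<kappa> rmic K a r"] \<open>N \<ge> 1\<close>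
    by (simp add: abs_le_iff)
  then have "(\<Sum>j\<in>{1..K}. a j / (4 * pi * d j) * \<kappa> (- (d j / c)))
      \<le> sig_norm M N (GammaK c fs \<kappa> rmic K a r)"
    unfolding GammaK_first_sample d_def .
  then show ?thesis
    using weight_le_if_weighted_sum_le[of "{1..K}" k \<eta> "A / (4 * pi * (c * \<delta>))"
        "\<lambda>j. a j / (4 * pi * d j)" "\<lambda>j. \<kappa> (- (d j / c))" Km] k \<open>\<eta> > 0\<close> \<open>0 \<le> A\<close>
      \<open>c > 0\<close> \<open>\<delta> > 0\<close> a_nonneg d_pos \<kappa>_bound alt
    by (simp add: d_def)
qed

lemma amplitude_ratio_bounded:
  fixes \<kappa> :: "real \<Rightarrow> real"
  assumes "c > 0" "N \<ge> 1" and \<kappa>_cont: "isCont \<kappa> 0" and \<kappa>_0: "\<kappa> 0 > 0"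
    and \<kappa>_bounded: "bounded (range \<kappa>)"
    and adm: "\<And>l. admissible c Tmax M rmic K (al l) (rl l)"
    and \<Gamma>_le: "\<And>l. sig_norm M N (GammaK c fs \<kappa> rmic K (al l) (rl l)) \<le> B"
    and a_le: "\<And>l j. j \<in> {1..K} \<Longrightarrow> al l j \<le> A"
    and "m \<in> {1..M}" "k \<in> {1..K}"
  shows "\<exists>R. \<forall>l. al l k / (4 * pi * norm (rl l k - rmic m)) \<le> R"
proof -
  obtain Km where Km: "\<And>t. \<bar>\<kappa> t\<bar> \<le> Km"
    using \<kappa>_bounded unfolding bounded_iff by auto
  obtain \<delta> where "\<delta> > 0" and \<delta>: "\<And>t. \<bar>t\<bar> < \<delta> \<Longrightarrow> \<kappa> 0 / 2 \<le> \<kappa> t"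
  proof -
    have "\<forall>\<^sub>F t in at 0. \<kappa> 0 / 2 < \<kappa> t"
      using \<kappa>_cont \<kappa>_0 unfolding isCont_def by (intro order_tendstoD(1)) auto
    then obtain \<delta> where "\<delta> > 0" and \<delta>: "\<And>t. t \<noteq> 0 \<Longrightarrow> \<bar>t\<bar> < \<delta> \<Longrightarrow> \<kappa> 0 / 2 < \<kappa> t"
      unfolding eventually_at by (auto simp: dist_real_def)
    have "\<kappa> 0 / 2 \<le> \<kappa> t" if "\<bar>t\<bar> < \<delta>" for t
      using \<delta>[OF _ that] \<kappa>_0 by (cases "t = 0") auto
    with \<open>\<delta> > 0\<close> show ?thesis using that by blast
  qed
  define W where "W = A / (4 * pi * (c * \<delta>))"
  have "al l k / (4 * pi * norm (rl l k - rmic m)) \<le> (B + K * (W * Km)) / (\<kappa> 0 / 2) + W" for l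
  proof -
    have "al l k / (4 * pi * norm (rl l k - rmic m))
        \<le> (sig_norm M N (GammaK c fs \<kappa> rmic K (al l) (rl l)) + K * (W * Km)) / (\<kappa> 0 / 2) + W"
      unfolding W_def using assms \<open>\<delta> > 0\<close> \<delta> Km
      by (intro amplitude_ratio_le) auto
    also have "\<dots> \<le> (B + K * (W * Km)) / (\<kappa> 0 / 2) + W"
      using \<Gamma>_le[of l] \<kappa>_0 by (simp add: divide_right_mono)
    finally show ?thesis .
  qed
  then show ?thesis by blast
qed

theorem lemma1:
  fixes c fs :: real and M N K :: nat
    and rmic :: "nat \<Rightarrow> real^3" and x :: "nat \<Rightarrow> nat \<Rightarrow> real"
    and \<kappa> :: "real \<Rightarrow> real"
    and al :: "nat \<Rightarrow> nat \<Rightarrow> real" and rl :: "nat \<Rightarrow> nat \<Rightarrow> real^3"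
  defines "Tmax \<equiv> (real N - 1) / fs"
  assumes c_pos: "c > 0" and fs_pos: "fs > 0"
    and M_pos: "M \<ge> 1" and N_pos: "N \<ge> 1" and K_pos: "K \<ge> 1"
    and kappa_cont: "continuous_on UNIV \<kappa>" and kappa0: "\<kappa> 0 > 0"
    and kappa_lim: "(\<kappa> \<longlongrightarrow> 0) at_infinity"
    and alb: "amplitude_lower_bounded c fs \<kappa> Tmax M N rmic K"
    and adm: "\<And>l. admissible c Tmax M rmic K (al l) (rl l)"
    and minimizing: "(\<lambda>l. Tobj c fs \<kappa> M N rmic K x (al l) (rl l)) \<longlonglongrightarrow>
        (INF ar\<in>{(a, r). admissible c Tmax M rmic K a r}. Tobj c fs \<kappa> M N rmic K x (fst ar) (snd ar))"
  shows "\<exists>\<phi>::nat \<Rightarrow> nat. strict_mono \<phi> \<and>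
    (\<forall>k\<in>{1..K}.
       (\<exists>r\<in>Cset c Tmax M rmic. \<exists>a\<ge>0.
          (\<lambda>l. rl (\<phi> l) k) \<longlonglongrightarrow> r \<and> (\<lambda>l. al (\<phi> l) k) \<longlonglongrightarrow> a)
     \<or> (\<exists>m\<in>{1..M}. \<exists>atil\<ge>0.
          (\<lambda>l. rl (\<phi> l) k) \<longlonglongrightarrow> rmic m \<and> (\<lambda>l. al (\<phi> l) k) \<longlonglongrightarrow> 0 \<and>
          (\<lambda>l. al (\<phi> l) k / (4 * pi * norm (rl (\<phi> l) k - rmic m))) \<longlonglongrightarrow> atil))"
proof -
  obtain B where \<Gamma>_le: "\<And>l. sig_norm M N (GammaK c fs \<kappa> rmic K (al l) (rl l)) \<le> B"
    using sig_norm_GammaK_bounded[OF convergentI[OF minimizing]] by blast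
  obtain C where "C > 0" and amp: "\<And>a r k. admissible c Tmax M rmic K a r \<Longrightarrow> k \<in> {1..K}
      \<Longrightarrow> a k \<le> sig_norm M N (GammaK c fs \<kappa> rmic K a r) / C"
    using amplitude_le_sig_norm_GammaK[OF alb] by blast
  have a_bounds: "al l k \<in> {0..B / C}" if "k \<in> {1..K}" for l k
    using amp[OF adm that, of l] divide_right_mono[OF \<Gamma>_le[of l], of C] \<open>C > 0\<close> adm[of l] that
    unfolding admissible_def by auto
  have ratio: "\<exists>R. \<forall>l. al l k / (4 * pi * norm (rl l k - rmic m)) \<le> R"
    if "k \<in> {1..K}" "m \<in> {1..M}" for k m
    using c_pos N_pos kappa0 kappa_cont adm \<Gamma>_le a_bounds that
      bounded_range_if_continuous_tendsto_at_infinity[OF kappa_cont kappa_lim]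
    by (intro amplitude_ratio_bounded[where B = B and A = "B / C"])
      (auto simp: continuous_on_eq_continuous_at)
  have balls_compact: "compact (\<Inter>m\<in>{1..M}. cball (rmic m) (c * Tmax))"
    using M_pos by (intro compact_Inter) auto
  define Q where "Q k \<phi> \<longleftrightarrow> source_limit (Cset c Tmax M rmic) (micset M rmic)
      ((\<lambda>l. rl l k) \<circ> \<phi>) ((\<lambda>l. al l k) \<circ> \<phi>)" for k and \<phi> :: "nat \<Rightarrow> nat"
  have extend: "\<exists>\<psi>. strict_mono \<psi> \<and> Q k (\<phi> \<circ> \<psi>)"
    if "k \<in> {1..K}" "strict_mono \<phi>" for k and \<phi> :: "nat \<Rightarrow> nat"
    unfolding Q_def o_assoc Cset_def
    by (rule source_limit_subseq_exists[OF balls_compact, where A = "B / C"])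
      (use adm a_bounds ratio that in \<open>auto simp: admissible_def Cset_def micset_def\<close>)
  have subseq: "Q k (\<phi> \<circ> \<psi>)" if "k \<in> {1..K}" "Q k \<phi>" "strict_mono \<psi>" for k \<phi> \<psi>
    using source_limit_subseq that(2,3) unfolding Q_def o_assoc .
  have "\<exists>\<phi>. strict_mono \<phi> \<and> (\<forall>k\<in>{1..K}. Q k \<phi>)"
    using extend subseq by (intro finite_common_subseq) auto
  then obtain \<phi> where "strict_mono \<phi>" "\<forall>k\<in>{1..K}. Q k \<phi>"
    by blast
  then show ?thesis
    unfolding Q_def source_limit_def micset_def by (auto simp: o_def)
qed

end
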